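(* Let $\mathbb{H}$ be a real Hilbert space, $\mathbf{x}$ a random vector in $\mathbb{H}$ with $\mathbb{E}[\|\mathbf{x}\|^2]<\infty$, and $\mathcal{S}\boldsymbol{\theta}=\mathbb{E}[\langle\boldsymbol{\theta},\mathbf{x}\rangle\mathbf{x}]$. Assume $\mathcal{S}$ has an orthonormal basis $(\mathbf{e}_i)$ of eigenvectors with eigenvalues $0<\lambda_i<\tfrac12$. Assume there is $\alpha>0$ such that for every $\beta<\alpha$ there is $C_\beta$ with $\mathbb{E}[\langle\boldsymbol{\theta},\mathbf{x}\rangle^2\langle\mathbf{x},\mathcal{S}^{-\beta}\mathbf{x}\rangle]\le C_\beta\langle\boldsymbol{\theta},\mathcal{S}^{1-\beta}\boldsymbol{\theta}\rangle$ for all $\boldsymbol{\theta}\in\mathbb{H}$. Let $\beta<\alpha$ and $0<\gamma<2/C_\beta$. Let $\boldsymbol{\theta}(0)\in\mathbb{H}$, let $\mathbf{x}(0),\mathbf{x}(1),\dots$ be i.i.d. copies of $\mathbf{x}$, and $\boldsymbol{\theta}(n+1)=\boldsymbol{\theta}(n)-\gamma\langle\boldsymbol{\theta}(n),\mathbf{x}(n)\rangle\mathbf{x}(n)$. Then the sequence $\mathbb{E}[\langle\boldsymbol{\theta}(n),\mathcal{S}^{-\beta}\boldsymbol{\theta}(n)\rangle]$ is decreasing in $n$, and thus bounded from above uniformly in $n$ by $M_\beta:=\langle\boldsymbol{\theta}(0),\mathcal{S}^{-\beta}\boldsymbol{\theta}(0)\rangle$.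
   Context: $\mathcal{S}^{\kappa}\boldsymbol{\theta}=\sum_i\lambda_i^{\kappa}\theta_i\mathbf{e}_i$ for $\boldsymbol{\theta}=\sum_i\theta_i\mathbf{e}_i$; quantities such as $\langle\boldsymbol{\theta},\mathcal{S}^{-\beta}\boldsymbol{\theta}\rangle=\sum_i\lambda_i^{-\beta}\theta_i^2$ take values in $[0,\infty]$. The step size satisfies $\gamma\in(0,1)$. *)

theory Defs
  imports "HOL-Probability.Probability"
begin

text \<open>Quadratic form of the fractional power of S in the eigenbasis (e_i), eigenvalues lam_i:
  qform I e lam k th = <th, S^k th> = sum over i in I of lam_i^k * <th,e_i>^2, valued in [0,infinity].\<close>
definition qform :: "'i set \<Rightarrow> ('i \<Rightarrow> 'a::real_inner) \<Rightarrow> ('i \<Rightarrow> real) \<Rightarrow> real \<Rightarrow> 'a \<Rightarrow> ennreal" where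
  "qform I e lam k th = (\<Sum>\<^sub>\<infinity> i\<in>I. ennreal (lam i powr k * (th \<bullet> e i)\<^sup>2))"

primrec sgd :: "real \<Rightarrow> 'a::real_inner \<Rightarrow> (nat \<Rightarrow> 'w \<Rightarrow> 'a) \<Rightarrow> nat \<Rightarrow> 'w \<Rightarrow> 'a" where
  "sgd g th0 Xs 0 w = th0"
| "sgd g th0 Xs (Suc n) w = sgd g th0 Xs n w - (g * (sgd g th0 Xs n w \<bullet> Xs n w)) *\<^sub>R Xs n w"

end

(*
  Write q_k(t) = <t, S^k t> = sum_i lam_i^k <t,e_i>^2 and t' = t - gamma <t,x> x.  Coordinatewise,
  <t',e_i> = <t,e_i> - gamma Z_i with Z_i = <t,x><x,e_i>, and E Z_i = lam_i <t,e_i> because e_i is an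
  eigenvector of S.  Expanding the squares and summing over i (Tonelli) gives, in [0, infinity],

    E q_(-beta)(t') + 2 gamma q_(1-beta)(t) <= q_(-beta)(t) + gamma^2 E[<t,x>^2 q_(-beta)(x)]
                                           <= q_(-beta)(t) + gamma^2 C q_(1-beta)(t).

  Since gamma C <= 2 and q_(1-beta) <= q_(-beta) (all lam_i <= 1), the finite term 2 gamma q_(1-beta)(t)
  cancels whenever q_(-beta)(t) is finite, so E q_(-beta)(t') <= q_(-beta)(t).  As x(n) is independent
  of theta(n) and distributed like x, integrating this bound against the law of theta(n) yields
  E q_(-beta)(theta(n+1)) <= E q_(-beta)(theta(n)).
*)

theory Submission
  imports Defs
begin

lemma infsum_ennreal_eq_nn_integral_count_space:
  fixes f :: "'i \<Rightarrow> ennreal"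
  assumes "countable I"
  shows "infsum f I = (\<integral>\<^sup>+ i. f i \<partial>count_space I)"
proof (cases "finite I")
  case True
  then show ?thesis by (simp add: nn_integral_count_space_finite)
next
  case False
  have bij: "bij_betw (from_nat_into I) UNIV I"
    by (rule bij_betw_from_nat_into[OF assms False])
  have "infsum f I = infsum (\<lambda>n. f (from_nat_into I n)) UNIV"
    by (rule infsum_reindex_bij_betw[OF bij, symmetric])
  also have "\<dots> = (\<Sum>n. f (from_nat_into I n))"
    by (rule sums_unique[OF has_sum_imp_sums[OF has_sum_infsum[OF nonneg_summable_on_complete]]]) simp
  also have "\<dots> = (\<integral>\<^sup>+ n. f (from_nat_into I n) \<partial>count_space UNIV)"
    by (rule nn_integral_count_space_nat[symmetric])
  also have "\<dots> = (\<integral>\<^sup>+ i. f i \<partial>count_space I)"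
    by (rule nn_integral_bij_count_space[OF bij])
  finally show ?thesis .
qed

lemma borel_measurable_nn_integral_count_space:
  fixes f :: "'i \<Rightarrow> 'a \<Rightarrow> ennreal"
  assumes "countable I" and "\<And>i. i \<in> I \<Longrightarrow> f i \<in> borel_measurable M"
  shows "(\<lambda>x. \<integral>\<^sup>+ i. f i x \<partial>count_space I) \<in> borel_measurable M"
proof (rule sigma_finite_measure.borel_measurable_nn_integral)
  show "sigma_finite_measure (count_space I)"
    by (rule sigma_finite_measure_count_space_countable[OF assms(1)])
  have "(\<lambda>(i, x). f i x) \<in> borel_measurable (count_space I \<Otimes>\<^sub>M M)"
    by (rule measurable_pair_measure_countable1[OF assms(1)]) (simp add: assms(2))
  then show "(\<lambda>(x, i). f i x) \<in> borel_measurable (M \<Otimes>\<^sub>M count_space I)"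
    by (subst measurable_pair_swap_iff) simp
qed

text \<open>The cross term is kept on the left, so that the inequality is meaningful in \<open>[0, \<infinity>]\<close>
  also when \<open>Z\<close> is not square integrable.\<close>

lemma (in prob_space) nn_integral_square_diff_le:
  fixes Z :: "'a \<Rightarrow> real"
  assumes Z: "integrable M Z" and cross_nonneg: "0 \<le> \<gamma> * x * expectation Z"
  shows "(\<integral>\<^sup>+ w. ennreal ((x - \<gamma> * Z w)\<^sup>2) \<partial>M) + ennreal (2 * \<gamma> * x * expectation Z)
    \<le> ennreal (x\<^sup>2) + ennreal (\<gamma>\<^sup>2) * (\<integral>\<^sup>+ w. ennreal ((Z w)\<^sup>2) \<partial>M)"
proof (cases "\<gamma> \<noteq> 0 \<and> (\<integral>\<^sup>+ w. ennreal ((Z w)\<^sup>2) \<partial>M) = \<infinity>")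
  case True
  then show ?thesis by (simp add: ennreal_mult_top)
next
  case False
  have [measurable]: "Z \<in> borel_measurable M"
    using Z by (rule borel_measurable_integrable)
  have Z2: "integrable M (\<lambda>w. \<gamma>\<^sup>2 * (Z w)\<^sup>2)"
  proof (cases "\<gamma> = 0")
    case False
    with \<open>\<not> (\<gamma> \<noteq> 0 \<and> _)\<close> have "(\<integral>\<^sup>+ w. ennreal ((Z w)\<^sup>2) \<partial>M) < \<infinity>"
      by (simp add: less_top)
    then have "integrable M (\<lambda>w. (Z w)\<^sup>2)"
      by (intro integrableI_nonneg) auto
    then show ?thesis by simp
  qed simp
  have expand: "(x - \<gamma> * Z w)\<^sup>2 = x\<^sup>2 - 2 * \<gamma> * x * Z w + \<gamma>\<^sup>2 * (Z w)\<^sup>2" for w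
    by (simp add: power2_eq_square algebra_simps)
  have lin: "integrable M (\<lambda>w. x\<^sup>2 - 2 * \<gamma> * x * Z w)"
    using Z by simp
  define A where "A = expectation (\<lambda>w. (x - \<gamma> * Z w)\<^sup>2)"
  define B where "B = expectation (\<lambda>w. \<gamma>\<^sup>2 * (Z w)\<^sup>2)"
  have "integrable M (\<lambda>w. (x - \<gamma> * Z w)\<^sup>2)"
    unfolding expand using lin Z2 by (rule Bochner_Integration.integrable_add)
  then have lhs: "(\<integral>\<^sup>+ w. ennreal ((x - \<gamma> * Z w)\<^sup>2) \<partial>M) = ennreal A"
    unfolding A_def by (intro nn_integral_eq_integral) auto
  have "A = x\<^sup>2 - 2 * \<gamma> * x * expectation Z + B"
    unfolding A_def B_def expand using Z lin Z2 by (simp add: prob_space)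
  then have sum: "A + 2 * \<gamma> * x * expectation Z = x\<^sup>2 + B"
    by simp
  have rhs: "ennreal (\<gamma>\<^sup>2) * (\<integral>\<^sup>+ w. ennreal ((Z w)\<^sup>2) \<partial>M) = ennreal B"
  proof -
    have "ennreal (\<gamma>\<^sup>2) * (\<integral>\<^sup>+ w. ennreal ((Z w)\<^sup>2) \<partial>M) = (\<integral>\<^sup>+ w. ennreal (\<gamma>\<^sup>2 * (Z w)\<^sup>2) \<partial>M)"
      by (simp add: ennreal_mult nn_integral_cmult)
    also have "\<dots> = ennreal B"
      unfolding B_def using Z2 by (intro nn_integral_eq_integral) auto
    finally show ?thesis .
  qed
  have "0 \<le> A" "0 \<le> B" "0 \<le> 2 * \<gamma> * x * expectation Z"
    using cross_nonneg by (simp_all add: A_def B_def integral_nonneg_AE)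
  then have "ennreal A + ennreal (2 * \<gamma> * x * expectation Z) = ennreal (x\<^sup>2) + ennreal B"
    by (simp add: ennreal_plus[symmetric] sum del: ennreal_plus)
  then show ?thesis
    by (simp add: lhs rhs)
qed

lemma countable_orthonormal:
  fixes e :: "'i \<Rightarrow> 'a::{real_inner, second_countable_topology}"
  assumes orthonormal: "\<And>i j. i \<in> I \<Longrightarrow> j \<in> I \<Longrightarrow> e i \<bullet> e j = (if i = j then 1 else 0)"
  shows "countable I"
proof -
  have far: "1 < dist (e i) (e j)" if "i \<in> I" "j \<in> I" "i \<noteq> j" for i j
  proof -
    have "(dist (e i) (e j))\<^sup>2 = e i \<bullet> e i - 2 * (e i \<bullet> e j) + e j \<bullet> e j"
      by (simp add: dist_norm power2_norm_eq_inner algebra_simps inner_commute)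
    also have "\<dots> = 2"
      using orthonormal that by simp
    finally have "1\<^sup>2 < (dist (e i) (e j))\<^sup>2"
      by simp
    then show ?thesis
      by (rule power2_less_imp_less) simp
  qed
  define B where "B i = ball (e i) (1/2)" for i
  have disjoint: "B i \<inter> B j = {}" if "i \<in> I" "j \<in> I" "i \<noteq> j" for i j
  proof -
    have "\<not> (dist (e i) y < 1/2 \<and> dist (e j) y < 1/2)" for y
      using far[OF that] dist_triangle_half_l[of "e i" y 1 "e j"] by auto
    then show ?thesis by (auto simp: B_def)
  qed
  have "countable (B ` I)"
  proof (rule countable_disjoint_open_subsets)
    show "pairwise disjnt (B ` I)"
    proof (rule pairwise_imageI)
      fix i j assume "i \<in> I" "j \<in> I" "i \<noteq> j"
      then show "disjnt (B i) (B j)"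
        using disjoint by (simp add: disjnt_def)
    qed
  qed (auto simp: B_def)
  moreover have "inj_on B I"
  proof (rule inj_onI)
    fix i j assume ij: "i \<in> I" "j \<in> I" "B i = B j"
    show "i = j"
    proof (rule ccontr)
      assume "i \<noteq> j"
      with ij have "B i = {}"
        using disjoint[of i j] by simp
      moreover have "e i \<in> B i"
        by (simp add: B_def)
      ultimately show False
        by simp
    qed
  qed
  ultimately show ?thesis
    by (rule countable_image_inj_on)
qed

lemma qform_eq_nn_integral_count_space:
  assumes "countable I"
  shows "qform I e lam k t = (\<integral>\<^sup>+ i. ennreal (lam i powr k * (t \<bullet> e i)\<^sup>2) \<partial>count_space I)"
  unfolding qform_def by (rule infsum_ennreal_eq_nn_integral_count_space[OF assms])

lemma borel_measurable_qform:
  fixes e :: "'i \<Rightarrow> 'a::{real_inner, second_countable_topology}"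
  assumes "countable I"
  shows "qform I e lam k \<in> borel_measurable borel"
  unfolding qform_eq_nn_integral_count_space[OF assms, abs_def]
  by (rule borel_measurable_nn_integral_count_space[OF assms]) simp

lemma qform_antimono_exponent:
  assumes "\<And>i. i \<in> I \<Longrightarrow> 0 \<le> lam i \<and> lam i \<le> 1" and "k \<le> k'"
  shows "qform I e lam k' t \<le> qform I e lam k t"
  unfolding qform_def
  by (rule infsum_mono[OF nonneg_summable_on_complete nonneg_summable_on_complete])
    (auto intro!: ennreal_leI mult_right_mono powr_mono' simp: assms)

locale covariance_eigenbasis = prob_space M
  for M :: "'w measure"
    and X :: "'w \<Rightarrow> 'a::{real_inner, complete_space, second_countable_topology}"
    and I :: "'i set" and e :: "'i \<Rightarrow> 'a" and lam :: "'i \<Rightarrow> real" +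
  assumes X_measurable [measurable]: "X \<in> borel_measurable M"
    and orthonormal: "\<And>i j. i \<in> I \<Longrightarrow> j \<in> I \<Longrightarrow> e i \<bullet> e j = (if i = j then 1 else 0)"
    and eigen: "\<And>i. i \<in> I \<Longrightarrow> (\<integral> w. (e i \<bullet> X w) *\<^sub>R X w \<partial>M) = lam i *\<^sub>R e i"
    and lam_pos: "\<And>i. i \<in> I \<Longrightarrow> 0 < lam i"
begin

lemma countable_index: "countable I"
  using orthonormal by (rule countable_orthonormal)

text \<open>A non-integrable function has Bochner integral 0, so the eigenvector equation with a nonzero
  eigenvalue certifies integrability. (Bounding by the second moment of \<open>X\<close> would need the
  type of \<open>X\<close> to be of class \<open>banach\<close>, which is not assumed.)\<close>

lemma integrable_eigen_moment:
  assumes "i \<in> I"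
  shows "integrable M (\<lambda>w. (e i \<bullet> X w) *\<^sub>R X w)"
proof (rule ccontr)
  assume "\<not> ?thesis"
  then have "lam i *\<^sub>R e i = 0"
    using eigen[OF assms] by (simp add: not_integrable_integral_eq)
  moreover have "e i \<noteq> 0"
    using orthonormal[OF assms assms] by auto
  ultimately show False
    using lam_pos[OF assms] by simp
qed

lemma
  assumes "i \<in> I"
  shows integrable_inner_mult_inner: "integrable M (\<lambda>w. (t \<bullet> X w) * (X w \<bullet> e i))"
    and integral_inner_mult_inner: "(\<integral> w. (t \<bullet> X w) * (X w \<bullet> e i) \<partial>M) = lam i * (t \<bullet> e i)"
proof -
  have eq: "(\<lambda>w. (t \<bullet> X w) * (X w \<bullet> e i)) = (\<lambda>w. t \<bullet> ((e i \<bullet> X w) *\<^sub>R X w))"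
    by (simp add: inner_commute mult.commute)
  show "integrable M (\<lambda>w. (t \<bullet> X w) * (X w \<bullet> e i))"
    unfolding eq by (intro integrable_inner_right integrable_eigen_moment[OF assms])
  have "(\<integral> w. t \<bullet> ((e i \<bullet> X w) *\<^sub>R X w) \<partial>M) = t \<bullet> (\<integral> w. (e i \<bullet> X w) *\<^sub>R X w \<partial>M)"
    by (rule integral_inner_right) (rule integrable_eigen_moment[OF assms])
  then show "(\<integral> w. (t \<bullet> X w) * (X w \<bullet> e i) \<partial>M) = lam i * (t \<bullet> e i)"
    unfolding eq eigen[OF assms] by simp
qed

lemma nn_integral_coordinate_step:
  assumes "i \<in> I" and "0 \<le> \<gamma>"
  shows "(\<integral>\<^sup>+ w. ennreal (lam i powr k * ((t - (\<gamma> * (t \<bullet> X w)) *\<^sub>R X w) \<bullet> e i)\<^sup>2) \<partial>M)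
      + ennreal (2 * \<gamma>) * ennreal (lam i powr (k + 1) * (t \<bullet> e i)\<^sup>2)
    \<le> ennreal (lam i powr k * (t \<bullet> e i)\<^sup>2)
      + ennreal (\<gamma>\<^sup>2) * (\<integral>\<^sup>+ w. ennreal ((t \<bullet> X w)\<^sup>2) * ennreal (lam i powr k * (X w \<bullet> e i)\<^sup>2) \<partial>M)"
proof -
  define \<mu> where "\<mu> = lam i powr k"
  define x where "x = t \<bullet> e i"
  define Z where "Z w = (t \<bullet> X w) * (X w \<bullet> e i)" for w
  have [measurable]: "Z \<in> borel_measurable M"
    unfolding Z_def by measurable
  have \<mu>: "0 \<le> \<mu>"
    by (simp add: \<mu>_def)
  have Z: "integrable M Z" "expectation Z = lam i * x"
    unfolding Z_def x_def
    by (rule integrable_inner_mult_inner[OF assms(1)], rule integral_inner_mult_inner[OF assms(1)])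
  have lam: "0 \<le> lam i"
    using lam_pos[OF assms(1)] by simp
  have cross: "0 \<le> \<gamma> * x * expectation Z"
  proof -
    have "\<gamma> * x * expectation Z = \<gamma> * (lam i * (x * x))"
      unfolding Z(2) by (simp add: mult_ac)
    moreover have "0 \<le> \<gamma> * (lam i * (x * x))"
      using \<open>0 \<le> \<gamma>\<close> lam by (simp add: mult_nonneg_nonneg)
    ultimately show ?thesis
      by linarith
  qed
  have "(\<integral>\<^sup>+ w. ennreal (\<mu> * ((t - (\<gamma> * (t \<bullet> X w)) *\<^sub>R X w) \<bullet> e i)\<^sup>2) \<partial>M)
      + ennreal (2 * \<gamma>) * ennreal (\<mu> * lam i * x\<^sup>2)
    = ennreal \<mu> * ((\<integral>\<^sup>+ w. ennreal ((x - \<gamma> * Z w)\<^sup>2) \<partial>M) + ennreal (2 * \<gamma> * x * expectation Z))"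
  proof -
    have "(t - (\<gamma> * (t \<bullet> X w)) *\<^sub>R X w) \<bullet> e i = x - \<gamma> * Z w" for w
      by (simp add: x_def Z_def inner_diff_left algebra_simps)
    moreover have "ennreal (2 * \<gamma>) * ennreal (\<mu> * lam i * x\<^sup>2) = ennreal \<mu> * ennreal (2 * \<gamma> * x * expectation Z)"
    proof -
      have "ennreal (2 * \<gamma>) * ennreal (\<mu> * lam i * x\<^sup>2) = ennreal (2 * \<gamma> * (\<mu> * lam i * x\<^sup>2))"
        using \<open>0 \<le> \<gamma>\<close> by (simp add: ennreal_mult')
      also have "\<dots> = ennreal (\<mu> * (2 * \<gamma> * x * expectation Z))"
        by (simp add: Z(2) power2_eq_square mult_ac)
      also have "\<dots> = ennreal \<mu> * ennreal (2 * \<gamma> * x * expectation Z)"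
        using \<mu> by (rule ennreal_mult')
      finally show ?thesis .
    qed
    ultimately show ?thesis
      using \<mu> by (simp add: ennreal_mult nn_integral_cmult distrib_left)
  qed
  also have "\<dots> \<le> ennreal \<mu> * (ennreal (x\<^sup>2) + ennreal (\<gamma>\<^sup>2) * (\<integral>\<^sup>+ w. ennreal ((Z w)\<^sup>2) \<partial>M))"
    using cross by (intro mult_left_mono nn_integral_square_diff_le Z(1)) simp_all
  also have "\<dots> = ennreal (\<mu> * x\<^sup>2)
      + ennreal (\<gamma>\<^sup>2) * (\<integral>\<^sup>+ w. ennreal ((t \<bullet> X w)\<^sup>2) * ennreal (\<mu> * (X w \<bullet> e i)\<^sup>2) \<partial>M)"
    using \<mu> by (simp add: Z_def ennreal_mult[symmetric] nn_integral_cmult[symmetric] distrib_left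
        power_mult_distrib algebra_simps)
  finally show ?thesis
    using lam by (simp add: \<mu>_def x_def powr_add)
qed

lemma nn_integral_qform_step:
  assumes "0 \<le> \<gamma>"
  shows "(\<integral>\<^sup>+ w. qform I e lam k (t - (\<gamma> * (t \<bullet> X w)) *\<^sub>R X w) \<partial>M)
      + ennreal (2 * \<gamma>) * qform I e lam (k + 1) t
    \<le> qform I e lam k t + ennreal (\<gamma>\<^sup>2) * (\<integral>\<^sup>+ w. ennreal ((t \<bullet> X w)\<^sup>2) * qform I e lam k (X w) \<partial>M)"
proof -
  let ?y = "\<lambda>w. t - (\<gamma> * (t \<bullet> X w)) *\<^sub>R X w"
  note qform = qform_eq_nn_integral_count_space[OF countable_index]
  note tonelli = nn_integral_count_space_nn_integral[OF countable_index]
  have "(\<integral>\<^sup>+ w. qform I e lam k (?y w) \<partial>M) + ennreal (2 * \<gamma>) * qform I e lam (k + 1) t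
      = (\<integral>\<^sup>+ i. (\<integral>\<^sup>+ w. ennreal (lam i powr k * (?y w \<bullet> e i)\<^sup>2) \<partial>M)
          + ennreal (2 * \<gamma>) * ennreal (lam i powr (k + 1) * (t \<bullet> e i)\<^sup>2) \<partial>count_space I)"
    unfolding qform by (subst tonelli) (simp_all add: nn_integral_add nn_integral_cmult)
  also have "\<dots> \<le> (\<integral>\<^sup>+ i. ennreal (lam i powr k * (t \<bullet> e i)\<^sup>2)
      + ennreal (\<gamma>\<^sup>2) * (\<integral>\<^sup>+ w. ennreal ((t \<bullet> X w)\<^sup>2) * ennreal (lam i powr k * (X w \<bullet> e i)\<^sup>2) \<partial>M)
      \<partial>count_space I)"
    using assms by (intro nn_integral_mono nn_integral_coordinate_step) simp_all
  also have "\<dots> = qform I e lam k t + ennreal (\<gamma>\<^sup>2)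
      * (\<integral>\<^sup>+ i. \<integral>\<^sup>+ w. ennreal ((t \<bullet> X w)\<^sup>2) * ennreal (lam i powr k * (X w \<bullet> e i)\<^sup>2) \<partial>M \<partial>count_space I)"
    unfolding qform by (simp add: nn_integral_add nn_integral_cmult)
  also have "(\<integral>\<^sup>+ i. \<integral>\<^sup>+ w. ennreal ((t \<bullet> X w)\<^sup>2) * ennreal (lam i powr k * (X w \<bullet> e i)\<^sup>2) \<partial>M \<partial>count_space I)
      = (\<integral>\<^sup>+ w. ennreal ((t \<bullet> X w)\<^sup>2) * qform I e lam k (X w) \<partial>M)"
    unfolding qform by (subst tonelli[symmetric]) (simp_all add: nn_integral_cmult)
  finally show ?thesis .
qed

lemma nn_integral_qform_step_le:
  assumes lam_le_1: "\<And>i. i \<in> I \<Longrightarrow> lam i \<le> 1"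
    and "0 \<le> \<gamma>" and "\<gamma> * C \<le> 2"
    and moment: "\<And>t. (\<integral>\<^sup>+ w. ennreal ((t \<bullet> X w)\<^sup>2) * qform I e lam k (X w) \<partial>M)
      \<le> ennreal C * qform I e lam (k + 1) t"
  shows "(\<integral>\<^sup>+ w. qform I e lam k (t - (\<gamma> * (t \<bullet> X w)) *\<^sub>R X w) \<partial>M) \<le> qform I e lam k t"
proof (cases "qform I e lam k t = \<infinity>")
  case False
  let ?cross = "ennreal (2 * \<gamma>) * qform I e lam (k + 1) t"
  have "qform I e lam (k + 1) t \<le> qform I e lam k t"
    using lam_pos lam_le_1 by (intro qform_antimono_exponent) (auto simp: less_imp_le)
  with False have cross_finite: "?cross \<noteq> \<infinity>"
    by (auto simp: ennreal_mult_eq_top_iff top_unique)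
  have step_size: "ennreal (\<gamma>\<^sup>2) * ennreal C \<le> ennreal (2 * \<gamma>)"
  proof -
    have "\<gamma> * (\<gamma> * C) \<le> \<gamma> * 2"
      using assms(2,3) by (rule mult_left_mono[rotated])
    then show ?thesis
      by (simp add: ennreal_mult'[symmetric] power2_eq_square mult.assoc mult.commute[of 2] ennreal_leI)
  qed
  have "(\<integral>\<^sup>+ w. qform I e lam k (t - (\<gamma> * (t \<bullet> X w)) *\<^sub>R X w) \<partial>M) + ?cross
      \<le> qform I e lam k t + ennreal (\<gamma>\<^sup>2) * (\<integral>\<^sup>+ w. ennreal ((t \<bullet> X w)\<^sup>2) * qform I e lam k (X w) \<partial>M)"
    by (rule nn_integral_qform_step[OF \<open>0 \<le> \<gamma>\<close>])
  also have "\<dots> \<le> qform I e lam k t + ennreal (\<gamma>\<^sup>2) * (ennreal C * qform I e lam (k + 1) t)"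
    by (intro add_left_mono mult_left_mono moment) simp
  also have "\<dots> \<le> qform I e lam k t + ?cross"
    using step_size by (intro add_left_mono) (simp add: mult.assoc[symmetric] mult_right_mono)
  finally show ?thesis
    using cross_finite by (simp add: add.commute[of _ ?cross] ennreal_add_left_cancel_le)
qed simp

end

lemma sgd_cong_prefix:
  "(\<And>i. i < n \<Longrightarrow> Xs i w = Ys i v) \<Longrightarrow> sgd g th0 Xs n w = sgd g th0 Ys n v"
  by (induction n) auto

lemma borel_measurable_sgd:
  fixes th0 :: "'a::{real_inner, second_countable_topology}"
  assumes [measurable]: "\<And>n. Xs n \<in> borel_measurable M"
  shows "(\<lambda>w. sgd g th0 Xs n w) \<in> borel_measurable M"
proof (induction n)
  case (Suc n)
  note [measurable] = Suc.IH
  show ?case unfolding sgd.simps by measurable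
qed simp

lemma borel_measurable_sgd_PiM:
  fixes th0 :: "'a::{real_inner, second_countable_topology}"
  assumes "n \<le> N"
  shows "(\<lambda>f. sgd g th0 (\<lambda>i (_::unit). f i) n ()) \<in> borel_measurable (PiM {..<N} (\<lambda>_. borel))"
  using assms
proof (induction n)
  case (Suc n)
  note [measurable] = Suc.IH[OF Suc_leD[OF Suc.prems]]
  have [measurable]: "(\<lambda>f. f n) \<in> borel_measurable (PiM {..<N} (\<lambda>_. (borel :: 'a measure)))"
    using Suc.prems by (intro measurable_component_singleton) simp
  show ?case unfolding sgd.simps by measurable
qed simp

lemma (in prob_space) indep_var_sgd:
  fixes Xs :: "nat \<Rightarrow> 'a \<Rightarrow> 'b::{real_inner, second_countable_topology}"
  assumes "indep_vars (\<lambda>_. borel) Xs UNIV"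
  shows "indep_var borel (sgd g th0 Xs n) borel (Xs n)"
proof -
  define R where "R = (\<lambda>f :: nat \<Rightarrow> 'b. sgd g th0 (\<lambda>i (_::unit). f i) n ())"
  have "indep_var (PiM {..<n} (\<lambda>_. borel)) (\<lambda>w. restrict (\<lambda>i. Xs i w) {..<n})
      (PiM {n} (\<lambda>_. borel)) (\<lambda>w. restrict (\<lambda>i. Xs i w) {n})"
    by (rule indep_var_restrict[OF assms]) auto
  then have "indep_var borel (R \<circ> (\<lambda>w. restrict (\<lambda>i. Xs i w) {..<n}))
      borel ((\<lambda>f. f n) \<circ> (\<lambda>w. restrict (\<lambda>i. Xs i w) {n}))"
    by (rule indep_var_compose)
      (simp_all add: R_def borel_measurable_sgd_PiM measurable_component_singleton)
  moreover have "R \<circ> (\<lambda>w. restrict (\<lambda>i. Xs i w) {..<n}) = sgd g th0 Xs n"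
  proof
    fix w
    show "(R \<circ> (\<lambda>w. restrict (\<lambda>i. Xs i w) {..<n})) w = sgd g th0 Xs n w"
      unfolding R_def comp_def by (rule sgd_cong_prefix) simp
  qed
  ultimately show ?thesis
    by (simp add: comp_def)
qed

lemma (in prob_space) nn_integral_indep_var_pair:
  fixes Y Z :: "'a \<Rightarrow> 'b::topological_space"
  assumes "indep_var borel Y borel Z"
    and [measurable]: "Y \<in> borel_measurable M" "Z \<in> borel_measurable M"
    "H \<in> borel_measurable (borel \<Otimes>\<^sub>M borel)"
  shows "(\<integral>\<^sup>+ w. H (Y w, Z w) \<partial>M) = (\<integral>\<^sup>+ y. \<integral>\<^sup>+ z. H (y, z) \<partial>distr M borel Z \<partial>distr M borel Y)"
proof -
  interpret Z: prob_space "distr M borel Z"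
    by (rule prob_space_distr) simp
  have "measurable (distr M borel Y \<Otimes>\<^sub>M distr M borel Z) (borel :: ennreal measure)
      = measurable (borel \<Otimes>\<^sub>M borel) borel"
    by (intro measurable_cong_sets sets_pair_measure_cong) simp_all
  then have H_product: "H \<in> borel_measurable (distr M borel Y \<Otimes>\<^sub>M distr M borel Z)"
    using assms(4) by simp
  have joint: "distr M borel Y \<Otimes>\<^sub>M distr M borel Z = distr M (borel \<Otimes>\<^sub>M borel) (\<lambda>w. (Y w, Z w))"
    using assms(1) unfolding indep_var_distribution_eq by blast
  have "(\<integral>\<^sup>+ w. H (Y w, Z w) \<partial>M) = (\<integral>\<^sup>+ p. H p \<partial>distr M (borel \<Otimes>\<^sub>M borel) (\<lambda>w. (Y w, Z w)))"
    by (simp add: nn_integral_distr)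
  also have "\<dots> = (\<integral>\<^sup>+ p. H p \<partial>(distr M borel Y \<Otimes>\<^sub>M distr M borel Z))"
    by (simp only: joint)
  also have "\<dots> = (\<integral>\<^sup>+ y. \<integral>\<^sup>+ z. H (y, z) \<partial>distr M borel Z \<partial>distr M borel Y)"
    by (rule Z.nn_integral_fst[symmetric]) (simp add: H_product)
  finally show ?thesis .
qed

lemma (in prob_space) nn_integral_sgd_Suc_le:
  fixes Xs :: "nat \<Rightarrow> 'a \<Rightarrow> 'b::{real_inner, second_countable_topology}"
  assumes indep: "indep_vars (\<lambda>_. borel) Xs UNIV"
    and ident: "\<And>n. distr M borel (Xs n) = distr M borel X"
    and [measurable]: "X \<in> borel_measurable M" "q \<in> borel_measurable borel"
    and one_step: "\<And>t. (\<integral>\<^sup>+ w. q (t - (\<gamma> * (t \<bullet> X w)) *\<^sub>R X w) \<partial>M) \<le> q t"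
  shows "(\<integral>\<^sup>+ w. q (sgd \<gamma> th0 Xs (Suc n) w) \<partial>M) \<le> (\<integral>\<^sup>+ w. q (sgd \<gamma> th0 Xs n w) \<partial>M)"
proof -
  have [measurable]: "Xs i \<in> borel_measurable M" for i
    using indep by (auto simp: indep_vars_def)
  have [measurable]: "sgd \<gamma> th0 Xs n \<in> borel_measurable M"
    by (rule borel_measurable_sgd) simp
  define H where "H p = q (fst p - (\<gamma> * (fst p \<bullet> snd p)) *\<^sub>R snd p)" for p :: "'b \<times> 'b"
  have [measurable]: "H \<in> borel_measurable (borel \<Otimes>\<^sub>M borel)"
    unfolding H_def by measurable
  have "(\<integral>\<^sup>+ w. q (sgd \<gamma> th0 Xs (Suc n) w) \<partial>M) = (\<integral>\<^sup>+ w. H (sgd \<gamma> th0 Xs n w, Xs n w) \<partial>M)"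
    by (simp add: H_def)
  also have "\<dots> = (\<integral>\<^sup>+ t. \<integral>\<^sup>+ x. H (t, x) \<partial>distr M borel (Xs n) \<partial>distr M borel (sgd \<gamma> th0 Xs n))"
    by (rule nn_integral_indep_var_pair[OF indep_var_sgd[OF indep]]) simp_all
  also have "\<dots> \<le> (\<integral>\<^sup>+ t. q t \<partial>distr M borel (sgd \<gamma> th0 Xs n))"
  proof (rule nn_integral_mono)
    fix t
    have "(\<integral>\<^sup>+ x. H (t, x) \<partial>distr M borel (Xs n)) = (\<integral>\<^sup>+ w. H (t, X w) \<partial>M)"
      by (simp add: ident nn_integral_distr)
    also have "\<dots> \<le> q t"
      unfolding H_def by (simp add: one_step)
    finally show "(\<integral>\<^sup>+ x. H (t, x) \<partial>distr M borel (Xs n)) \<le> q t" .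
  qed
  also have "\<dots> = (\<integral>\<^sup>+ w. q (sgd \<gamma> th0 Xs n w) \<partial>M)"
    by (simp add: nn_integral_distr)
  finally show ?thesis .
qed

theorem corollary1:
  fixes M :: "'w measure"
    and X :: "'w \<Rightarrow> 'a::{real_inner, complete_space, second_countable_topology}"
    and Xs :: "nat \<Rightarrow> 'w \<Rightarrow> 'a"
    and S :: "'a \<Rightarrow> 'a"
    and I :: "'i set" and e :: "'i \<Rightarrow> 'a" and lam :: "'i \<Rightarrow> real"
    and \<alpha> \<beta> C \<gamma> :: real and th0 :: 'a
  assumes "prob_space M"
    and X_meas: "X \<in> borel_measurable M"
    and X_sq: "(\<integral>\<^sup>+ w. ennreal ((norm (X w))\<^sup>2) \<partial>M) < \<infinity>"
    and S_def: "\<And>th. S th = (\<integral> w. (th \<bullet> X w) *\<^sub>R X w \<partial>M)"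
    and orthonormal: "\<And>i j. i \<in> I \<Longrightarrow> j \<in> I \<Longrightarrow> e i \<bullet> e j = (if i = j then 1 else 0)"
    and complete: "closure (span (e ` I)) = UNIV"
    and eigen: "\<And>i. i \<in> I \<Longrightarrow> S (e i) = lam i *\<^sub>R e i"
    and lam_pos: "\<And>i. i \<in> I \<Longrightarrow> 0 < lam i"
    and lam_bound: "\<And>i. i \<in> I \<Longrightarrow> lam i < 1/2"
    and \<alpha>_pos: "\<alpha> > 0"
    and moment: "\<forall>b<\<alpha>. \<exists>Cb. \<forall>th.
        (\<integral>\<^sup>+ w. ennreal ((th \<bullet> X w)\<^sup>2) * qform I e lam (- b) (X w) \<partial>M)
          \<le> ennreal Cb * qform I e lam (1 - b) th"
    and \<beta>_lt: "\<beta> < \<alpha>"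
    and C_bound: "\<forall>th.
        (\<integral>\<^sup>+ w. ennreal ((th \<bullet> X w)\<^sup>2) * qform I e lam (- \<beta>) (X w) \<partial>M)
          \<le> ennreal C * qform I e lam (1 - \<beta>) th"
    and \<gamma>_pos: "0 < \<gamma>" and \<gamma>_lt1: "\<gamma> < 1" and \<gamma>_lt: "\<gamma> < 2 / C"
    and indep: "prob_space.indep_vars M (\<lambda>_. borel) Xs UNIV"
    and ident: "\<And>n. distr M borel (Xs n) = distr M borel X"
  shows "decseq (\<lambda>n. \<integral>\<^sup>+ w. qform I e lam (- \<beta>) (sgd \<gamma> th0 Xs n w) \<partial>M) \<and>
     (\<forall>n. (\<integral>\<^sup>+ w. qform I e lam (- \<beta>) (sgd \<gamma> th0 Xs n w) \<partial>M) \<le> qform I e lam (- \<beta>) th0)"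
proof -
  interpret covariance_eigenbasis M X I e lam
    using \<open>prob_space M\<close> X_meas orthonormal eigen lam_pos
    by (simp add: covariance_eigenbasis_def covariance_eigenbasis_axioms_def S_def)
  have "0 < C"
  proof (rule ccontr)
    assume "\<not> 0 < C"
    then have "2 / C \<le> 0"
      by (simp add: divide_nonneg_nonpos)
    with \<gamma>_pos \<gamma>_lt show False
      by linarith
  qed
  then have step_size: "\<gamma> * C \<le> 2"
    using \<gamma>_lt by (simp add: pos_less_divide_eq less_imp_le)
  have lam_le_1: "lam i \<le> 1" if "i \<in> I" for i
    using lam_bound[OF that] by simp
  have one_step: "(\<integral>\<^sup>+ w. qform I e lam (- \<beta>) (t - (\<gamma> * (t \<bullet> X w)) *\<^sub>R X w) \<partial>M)
      \<le> qform I e lam (- \<beta>) t" for t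
    using lam_le_1 step_size C_bound \<gamma>_pos by (intro nn_integral_qform_step_le) auto
  have dec: "decseq (\<lambda>n. \<integral>\<^sup>+ w. qform I e lam (- \<beta>) (sgd \<gamma> th0 Xs n w) \<partial>M)"
    using indep ident X_meas borel_measurable_qform[OF countable_index] one_step
    by (intro decseq_SucI nn_integral_sgd_Suc_le)
  moreover have "(\<integral>\<^sup>+ w. qform I e lam (- \<beta>) (sgd \<gamma> th0 Xs n w) \<partial>M) \<le> qform I e lam (- \<beta>) th0" for n
    using decseqD[OF dec, of 0 n] by (simp add: emeasure_space_1)
  ultimately show ?thesis
    by simp
qed

end
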